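(* Let $R$ be a ring with identity and $a,b,c\in R$. The following are equivalent: (i) $a$ is right $(b,c)$-invertible; (ii) ${}^\circ a\cap Rc=\{0\}$, $Rca\cap {}^\circ b=\{0\}$ and $R=abR+c^\circ$; (iii) ${}^\circ a\cap Rc=\{0\}$ and $R=abR+c^\circ$; (iv) $Rca\cap {}^\circ b=\{0\}$ and $R=abR+c^\circ$; (v) $R=abR+c^\circ$.
   Context: For $x\in R$: $xR=\{xr:r\in R\}$, $Rx=\{rx:r\in R\}$, $x^\circ=\{r: xr=0\}$, ${}^\circ x=\{r: rx=0\}$. The element $a$ is right $(b,c)$-invertible if there is $y\in R$ with $yR\subseteq bR$ and $cay=c$. *)

theory Defs
  imports Main
begin

definition right_ideal_gen :: "'a::ring_1 \<Rightarrow> 'a set" where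
  "right_ideal_gen x = {x * r | r. True}"

definition left_ideal_gen :: "'a::ring_1 \<Rightarrow> 'a set" where
  "left_ideal_gen x = {r * x | r. True}"

definition right_annih :: "'a::ring_1 \<Rightarrow> 'a set" where
  "right_annih x = {r. x * r = 0}"

definition left_annih :: "'a::ring_1 \<Rightarrow> 'a set" where
  "left_annih x = {r. r * x = 0}"

definition right_bc_invertible :: "'a::ring_1 \<Rightarrow> 'a \<Rightarrow> 'a \<Rightarrow> bool" where
  "right_bc_invertible a b c \<longleftrightarrow>
     (\<exists>y. right_ideal_gen y \<subseteq> right_ideal_gen b \<and> c * a * y = c)"

definition set_plus_ring :: "'a::ring_1 set \<Rightarrow> 'a set \<Rightarrow> 'a set" where
  "set_plus_ring A B = {x + y | x y. x \<in> A \<and> y \<in> B}"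

end

theory Submission
  imports Defs
begin

text \<open>Everything reduces to one equation: each condition of the theorem is equivalent to
  the solvability of \<open>c a b s = c\<close>. A solution \<open>s\<close> yields \<open>y = b s\<close>; conversely
  \<open>1 = a b s + t\<close> with \<open>c t = 0\<close> gives \<open>c a b s = c\<close>. Such an equation \<open>c a y = c\<close>
  forces \<open>\<^sup>\<circ>a \<inter> Rc = 0\<close>, since \<open>r c = r c a y\<close>; applied to \<open>(c a) b (s a) = c a\<close> it also
  forces \<open>Rca \<inter> \<^sup>\<circ>b = 0\<close>.\<close>

lemma mem_right_ideal_gen_self: "x \<in> right_ideal_gen x"
  unfolding right_ideal_gen_def by (auto intro: exI[of _ 1])

lemma right_ideal_gen_subset_iff:
  "right_ideal_gen y \<subseteq> right_ideal_gen b \<longleftrightarrow> y \<in> right_ideal_gen b"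
  using mem_right_ideal_gen_self[of y]
  unfolding right_ideal_gen_def by (auto simp: mult.assoc)

lemma right_bc_invertible_iff: "right_bc_invertible a b c \<longleftrightarrow> (\<exists>s. c * a * b * s = c)"
  unfolding right_bc_invertible_def right_ideal_gen_subset_iff
  by (auto simp: right_ideal_gen_def mult.assoc)

lemma UNIV_eq_right_ideal_plus_right_annih_iff:
  "UNIV = set_plus_ring (right_ideal_gen x) (right_annih c) \<longleftrightarrow> (\<exists>s. c * x * s = c)"
proof
  assume "UNIV = set_plus_ring (right_ideal_gen x) (right_annih c)"
  then have "1 \<in> set_plus_ring (right_ideal_gen x) (right_annih c)" by simp
  then obtain s t where st: "1 = x * s + t" "c * t = 0"
    unfolding set_plus_ring_def right_ideal_gen_def right_annih_def by blast
  have "c = c * (x * s + t)" using st(1) by simp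
  also have "\<dots> = c * x * s" using st(2) by (simp add: distrib_left mult.assoc)
  finally show "\<exists>s. c * x * s = c" by (intro exI[of _ s]) simp
next
  assume "\<exists>s. c * x * s = c"
  then obtain s where s: "c * x * s = c" by blast
  have "r \<in> set_plus_ring (right_ideal_gen x) (right_annih c)" for r
  proof -
    have "c * (r - x * s * r) = c * r - (c * x * s) * r"
      by (simp add: right_diff_distrib mult.assoc)
    then have "r - x * s * r \<in> right_annih c"
      using s unfolding right_annih_def by simp
    moreover have "x * (s * r) \<in> right_ideal_gen x"
      unfolding right_ideal_gen_def by blast
    moreover have "r = x * (s * r) + (r - x * s * r)" by (simp add: mult.assoc)
    ultimately show ?thesis unfolding set_plus_ring_def by blast
  qed
  then show "UNIV = set_plus_ring (right_ideal_gen x) (right_annih c)" by auto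
qed

lemma left_annih_inter_left_ideal_gen_eq_zero:
  assumes "c * a * y = c"
  shows "left_annih a \<inter> left_ideal_gen c = {0}"
proof (intro equalityI subsetI)
  fix x assume "x \<in> left_annih a \<inter> left_ideal_gen c"
  then obtain r where x: "x = r * c" "r * c * a = 0"
    unfolding left_annih_def left_ideal_gen_def by blast
  have "x = r * (c * a * y)" using x(1) assms by simp
  also have "\<dots> = (r * c * a) * y" by (simp add: mult.assoc)
  finally show "x \<in> {0}" using x(2) by simp
qed (auto simp: left_annih_def left_ideal_gen_def intro: exI[of _ 0])

theorem theorem2p14:
  fixes a b c :: "'a::ring_1"
  shows
  "(right_bc_invertible a b c \<longleftrightarrow>
      (left_annih a \<inter> left_ideal_gen c = {0} \<and>
       left_ideal_gen (c * a) \<inter> left_annih b = {0} \<and>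
       UNIV = set_plus_ring (right_ideal_gen (a * b)) (right_annih c)))
 \<and> (right_bc_invertible a b c \<longleftrightarrow>
      (left_annih a \<inter> left_ideal_gen c = {0} \<and>
       UNIV = set_plus_ring (right_ideal_gen (a * b)) (right_annih c)))
 \<and> (right_bc_invertible a b c \<longleftrightarrow>
      (left_ideal_gen (c * a) \<inter> left_annih b = {0} \<and>
       UNIV = set_plus_ring (right_ideal_gen (a * b)) (right_annih c)))
 \<and> (right_bc_invertible a b c \<longleftrightarrow>
      UNIV = set_plus_ring (right_ideal_gen (a * b)) (right_annih c))"
proof -
  have v: "right_bc_invertible a b c \<longleftrightarrow>
      UNIV = set_plus_ring (right_ideal_gen (a * b)) (right_annih c)"
    by (simp add: right_bc_invertible_iff UNIV_eq_right_ideal_plus_right_annih_iff mult.assoc)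
  have "left_annih a \<inter> left_ideal_gen c = {0} \<and> left_ideal_gen (c * a) \<inter> left_annih b = {0}"
    if "right_bc_invertible a b c"
  proof -
    from that obtain s where s: "c * a * (b * s) = c"
      unfolding right_bc_invertible_iff by (auto simp: mult.assoc)
    then have "c * a * b * (s * a) = c * a"
      by (metis mult.assoc)
    with s show ?thesis
      using left_annih_inter_left_ideal_gen_eq_zero by blast
  qed
  with v show ?thesis by blast
qed

end
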